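(* Let $g(n) = \frac{(\log n)^2}{n} f(n)$, let \[ L = \liminf_{k\to\infty} \frac{\log(R(k,k))}{k} \quad\text{and}\quad M = \limsup_{t\to\infty} \max_{1 \le s \le t} \frac{\log(R(s,t))}{\sqrt{st}}. \] Then \[ \liminf_{n\to\infty} g(n) \ge L^2 \quad\text{and}\quad \limsup_{n\to\infty} g(n) \ge M^2. \]
   Context: All logarithms are in base 2. For positive integers $s,t$, the Ramsey number $R(s,t)$ is the minimum $n$ such that every red/blue edge-coloring of the complete graph $K_n$ contains a red clique on $s$ vertices or a blue clique on $t$ vertices. For a graph $G$, $\chi(G)$ is its chromatic number and $\omega(G)$ its clique number. For $n \in \mathbb{N}$, $f(n)$ is the maximum of $\chi(G)/\omega(G)$ over all graphs $G$ on $n$ vertices. *)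

theory Defs
  imports Complex_Main "HOL-Library.Extended_Real" "HOL-Library.Liminf_Limsup"
begin

definition is_graph :: "nat \<Rightarrow> nat set set \<Rightarrow> bool" where
  "is_graph n E \<longleftrightarrow> (\<forall>e\<in>E. e \<subseteq> {..<n} \<and> card e = 2)"

definition chromatic_number :: "nat \<Rightarrow> nat set set \<Rightarrow> nat" where
  "chromatic_number n E = (LEAST k. \<exists>c::nat \<Rightarrow> nat.
      (\<forall>v<n. c v < k) \<and> (\<forall>u v. {u, v} \<in> E \<longrightarrow> c u \<noteq> c v))"

definition is_clique :: "nat set set \<Rightarrow> nat set \<Rightarrow> bool" where
  "is_clique E S \<longleftrightarrow> (\<forall>u\<in>S. \<forall>v\<in>S. u \<noteq> v \<longrightarrow> {u, v} \<in> E)"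

definition clique_number :: "nat \<Rightarrow> nat set set \<Rightarrow> nat" where
  "clique_number n E = Max {card S | S. S \<subseteq> {..<n} \<and> is_clique E S}"

definition f_ratio :: "nat \<Rightarrow> real" where
  "f_ratio n = Max {real (chromatic_number n E) / real (clique_number n E) | E. is_graph n E}"

definition g_fun :: "nat \<Rightarrow> real" where
  "g_fun n = (log 2 (real n))\<^sup>2 / real n * f_ratio n"

text \<open>Ramsey number R(s,t): colour True = red, False = blue, on the edges of K_n
  (vertex set {0..<n}).\<close>
definition ramsey :: "nat \<Rightarrow> nat \<Rightarrow> nat" where
  "ramsey s t = (LEAST n. \<forall>c :: nat set \<Rightarrow> bool.
      (\<exists>S\<subseteq>{..<n}. card S = s \<and> (\<forall>u\<in>S. \<forall>v\<in>S. u \<noteq> v \<longrightarrow> c {u, v})) \<or>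
      (\<exists>T\<subseteq>{..<n}. card T = t \<and> (\<forall>u\<in>T. \<forall>v\<in>T. u \<noteq> v \<longrightarrow> \<not> c {u, v})))"

definition L_const :: ereal where
  "L_const = liminf (\<lambda>k. ereal (log 2 (real (ramsey k k)) / real k))"

definition M_const :: ereal where
  "M_const = limsup (\<lambda>t. ereal (Max ((\<lambda>s. log 2 (real (ramsey s t)) / sqrt (real s * real t)) ` {1..t})))"

end

theory Submission
  imports Defs "HOL-Library.Ramsey"
begin

text \<open>If n < R(s,t), some red/blue colouring of K_n has neither a red K_s nor a blue K_t.
  Its red graph has clique number at most s - 1 and independence number at most t - 1,
  hence chromatic number at least n/(t - 1); so f(n) \<ge> n/((s-1)(t-1)) and
  g(n) \<ge> (log n)^2/((s-1)(t-1)). For the liminf, every large n lies in [R(j,j), R(j+1,j+1))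
  for some large j, which gives g(n) \<ge> (log R(j,j) / j)^2, eventually above a^2 for every a < L.
  For the limsup, n = R(s,t) - 1 gives g(n) \<ge> (log R(s,t) - 1)^2/(st), and for every b < M
  there are arbitrarily large t and s \<le> t for which this bound is at least b^2.\<close>

definition arrows :: "nat \<Rightarrow> nat \<Rightarrow> nat \<Rightarrow> bool" where
  "arrows n s t \<longleftrightarrow> (\<forall>c :: nat set \<Rightarrow> bool.
      (\<exists>S\<subseteq>{..<n}. card S = s \<and> (\<forall>u\<in>S. \<forall>v\<in>S. u \<noteq> v \<longrightarrow> c {u, v})) \<or>
      (\<exists>T\<subseteq>{..<n}. card T = t \<and> (\<forall>u\<in>T. \<forall>v\<in>T. u \<noteq> v \<longrightarrow> \<not> c {u, v})))"

lemma ramsey_eq_Least_arrows: "ramsey s t = (LEAST n. arrows n s t)"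
  unfolding ramsey_def arrows_def ..

lemma ex_arrows: "\<exists>n. arrows n s t"
proof -
  obtain r where r: "\<forall>(V::nat set) (E::nat set set). finite V \<and> card V \<ge> r \<longrightarrow>
      (\<exists>R \<subseteq> V. card R = s \<and> clique R E \<or> card R = t \<and> indep R E)"
    using ramsey2[of s t] by blast
  have "arrows r s t"
    unfolding arrows_def
  proof
    fix c :: "nat set \<Rightarrow> bool"
    from r[rule_format, of "{..<r}" "Collect c"] obtain R where
      "R \<subseteq> {..<r}" "card R = s \<and> clique R (Collect c) \<or> card R = t \<and> indep R (Collect c)"
      by auto
    then show "(\<exists>S\<subseteq>{..<r}. card S = s \<and> (\<forall>u\<in>S. \<forall>v\<in>S. u \<noteq> v \<longrightarrow> c {u, v})) \<or>
        (\<exists>T\<subseteq>{..<r}. card T = t \<and> (\<forall>u\<in>T. \<forall>v\<in>T. u \<noteq> v \<longrightarrow> \<not> c {u, v}))"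
      unfolding clique_def indep_def by blast
  qed
  then show ?thesis ..
qed

lemma arrows_ramsey: "arrows (ramsey s t) s t"
  unfolding ramsey_eq_Least_arrows by (rule LeastI_ex[OF ex_arrows])

lemma not_arrows_less_ramsey: "n < ramsey s t \<Longrightarrow> \<not> arrows n s t"
  unfolding ramsey_eq_Least_arrows by (rule not_less_Least)

lemma arrows_imp_min_le:
  assumes "arrows n s t"
  shows "min s t \<le> n"
proof -
  from assms[unfolded arrows_def, rule_format, of "\<lambda>_. True"]
  obtain S where "S \<subseteq> {..<n}" "card S = s \<or> card S = t"
    by blast
  moreover from \<open>S \<subseteq> {..<n}\<close> have "card S \<le> n"
    by (metis card_lessThan card_mono finite_lessThan)
  ultimately show ?thesis
    by auto
qed

lemma ramsey_ge_min: "min s t \<le> ramsey s t"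
  by (rule arrows_imp_min_le[OF arrows_ramsey])

lemma ramsey_diag_ge: "k \<le> ramsey k k"
  using ramsey_ge_min[of k k] by simp

lemma ramsey_one_le: "ramsey 1 t \<le> 1"
proof -
  have "arrows 1 1 t"
    unfolding arrows_def by (intro allI disjI1 exI[of _ "{0}"]) auto
  then show ?thesis
    unfolding ramsey_eq_Least_arrows by (rule Least_le)
qed

lemma finite_clique_sizes: "finite {card S | S. S \<subseteq> {..<n} \<and> is_clique E S}"
  by (rule finite_subset[of _ "{..n}"]) (auto intro: card_mono[of "{..<n}", simplified])

lemma clique_number_ge_one:
  assumes "0 < n"
  shows "1 \<le> clique_number n E"
proof -
  have "1 \<in> {card S | S. S \<subseteq> {..<n} \<and> is_clique E S}"
    using assms by (auto simp: is_clique_def intro!: exI[of _ "{0}"])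
  then show ?thesis
    unfolding clique_number_def by (rule Max_ge[OF finite_clique_sizes])
qed

lemma clique_number_le:
  assumes "\<And>S. S \<subseteq> {..<n} \<Longrightarrow> is_clique E S \<Longrightarrow> card S \<le> m"
  shows "clique_number n E \<le> m"
proof -
  have "0 \<in> {card S | S. S \<subseteq> {..<n} \<and> is_clique E S}"
    by (auto simp: is_clique_def intro!: exI[of _ "{}"])
  then show ?thesis
    unfolding clique_number_def using finite_clique_sizes assms
    by (subst Max_le_iff) auto
qed

lemma chromatic_colouring:
  assumes "is_graph n E"
  obtains col :: "nat \<Rightarrow> nat"
  where "\<And>v. v < n \<Longrightarrow> col v < chromatic_number n E"
    and "\<And>u v. {u, v} \<in> E \<Longrightarrow> col u \<noteq> col v"
proof -
  let ?proper = "\<lambda>k. \<exists>col::nat \<Rightarrow> nat.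
    (\<forall>v<n. col v < k) \<and> (\<forall>u v. {u, v} \<in> E \<longrightarrow> col u \<noteq> col v)"
  have "?proper n"
    using assms by (intro exI[of _ id]) (auto simp: is_graph_def)
  then have "?proper (chromatic_number n E)"
    unfolding chromatic_number_def by (rule LeastI)
  then show ?thesis
    using that by blast
qed

lemma card_le_chromatic_number_mult:
  assumes graph: "is_graph n E"
    and indep_le: "\<And>S. S \<subseteq> {..<n} \<Longrightarrow> indep S E \<Longrightarrow> card S \<le> m"
  shows "n \<le> chromatic_number n E * m"
proof -
  let ?k = "chromatic_number n E"
  obtain col where col_less: "\<And>v. v < n \<Longrightarrow> col v < ?k"
    and proper: "\<And>u v. {u, v} \<in> E \<Longrightarrow> col u \<noteq> col v"
    using chromatic_colouring[OF graph] by blast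
  define C where "C i = {v. v < n \<and> col v = i}" for i
  have card_C: "card (C i) \<le> m" for i
    using indep_le[of "C i"] proper unfolding C_def indep_def by blast
  have "{..<n} \<subseteq> (\<Union>i<?k. C i)"
    using col_less unfolding C_def by auto
  moreover have "finite (\<Union>i<?k. C i)"
    by (simp add: C_def)
  ultimately have "n \<le> card (\<Union>i<?k. C i)"
    by (metis card_lessThan card_mono)
  also have "\<dots> \<le> (\<Sum>i<?k. card (C i))"
    by (rule card_UN_le) simp
  also have "\<dots> \<le> ?k * m"
    using sum_bounded_above[of "{..<?k}" "\<lambda>i. card (C i)" m] card_C by simp
  finally show ?thesis .
qed

lemma ratio_le_f_ratio:
  assumes "is_graph n E"
  shows "real (chromatic_number n E) / real (clique_number n E) \<le> f_ratio n"
proof -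
  have "{E. is_graph n E} \<subseteq> Pow (Pow {..<n})"
    by (auto simp: is_graph_def)
  then have "finite {E. is_graph n E}"
    by (rule finite_subset) auto
  then show ?thesis
    unfolding f_ratio_def using assms
    by (intro Max_ge) (auto simp: setcompr_eq_image)
qed

lemma f_ratio_nonneg: "0 \<le> f_ratio n"
proof -
  have "is_graph n {}"
    by (simp add: is_graph_def)
  from ratio_le_f_ratio[OF this] show ?thesis
    by (meson divide_nonneg_nonneg of_nat_0_le_iff order_trans)
qed

lemma g_fun_nonneg: "0 \<le> g_fun n"
  unfolding g_fun_def using f_ratio_nonneg[of n] by simp

lemma ramsey_graph_exists:
  assumes "n < ramsey s t"
  obtains E where "is_graph n E" "clique_number n E \<le> s - 1"
    and "n \<le> chromatic_number n E * (t - 1)"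
proof -
  obtain c :: "nat set \<Rightarrow> bool" where
    no_red: "\<not> (\<exists>S\<subseteq>{..<n}. card S = s \<and> (\<forall>u\<in>S. \<forall>v\<in>S. u \<noteq> v \<longrightarrow> c {u, v}))" and
    no_blue: "\<not> (\<exists>T\<subseteq>{..<n}. card T = t \<and> (\<forall>u\<in>T. \<forall>v\<in>T. u \<noteq> v \<longrightarrow> \<not> c {u, v}))"
    using not_arrows_less_ramsey[OF assms] unfolding arrows_def by blast
  define E where "E = {e. e \<subseteq> {..<n} \<and> card e = 2 \<and> c e}"
  have edge_iff: "{u, v} \<in> E \<longleftrightarrow> u < n \<and> v < n \<and> u \<noteq> v \<and> c {u, v}" for u v
    by (auto simp: E_def)
  have graph: "is_graph n E"
    by (auto simp: is_graph_def E_def)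
  have "card S \<le> s - 1" if S: "S \<subseteq> {..<n}" "is_clique E S" for S
  proof (rule ccontr)
    assume "\<not> card S \<le> s - 1"
    then have "s \<le> card S"
      by simp
    then obtain S' where "S' \<subseteq> S" "card S' = s"
      by (rule obtain_subset_with_card_n)
    moreover have "\<forall>u\<in>S'. \<forall>v\<in>S'. u \<noteq> v \<longrightarrow> c {u, v}"
      using \<open>S' \<subseteq> S\<close> S(2) unfolding is_clique_def by (auto simp: edge_iff)
    ultimately show False
      using no_red S(1) by blast
  qed
  then have omega: "clique_number n E \<le> s - 1"
    by (rule clique_number_le)
  have "card T \<le> t - 1" if T: "T \<subseteq> {..<n}" "indep T E" for T
  proof (rule ccontr)
    assume "\<not> card T \<le> t - 1"
    then have "t \<le> card T"
      by simp
    then obtain T' where "T' \<subseteq> T" "card T' = t"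
      by (rule obtain_subset_with_card_n)
    moreover have "\<forall>u\<in>T'. \<forall>v\<in>T'. u \<noteq> v \<longrightarrow> \<not> c {u, v}"
      using \<open>T' \<subseteq> T\<close> T unfolding indep_def by (auto simp: edge_iff subset_iff)
    ultimately show False
      using no_blue T(1) by blast
  qed
  then have "n \<le> chromatic_number n E * (t - 1)"
    by (rule card_le_chromatic_number_mult[OF graph])
  with graph omega show ?thesis
    using that by blast
qed

lemma f_ratio_ge_less_ramsey:
  assumes n: "0 < n" "n < ramsey s t"
  shows "real n / (real (s - 1) * real (t - 1)) \<le> f_ratio n"
proof -
  obtain E where graph: "is_graph n E" and omega: "clique_number n E \<le> s - 1"
    and chi: "n \<le> chromatic_number n E * (t - 1)"
    using ramsey_graph_exists[OF n(2)] by blast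
  have "0 < t - 1"
    using chi n(1) by (cases "t - 1") auto
  moreover have "real n \<le> real (chromatic_number n E) * real (t - 1)"
    using chi by (metis of_nat_le_iff of_nat_mult)
  ultimately have n_div: "real n / real (t - 1) \<le> real (chromatic_number n E)"
    by (simp add: pos_divide_le_eq)
  have "real n / (real (s - 1) * real (t - 1)) = real n / real (t - 1) / real (s - 1)"
    by simp
  also have "\<dots> \<le> real (chromatic_number n E) / real (s - 1)"
    using n_div by (rule divide_right_mono) simp
  also have "\<dots> \<le> real (chromatic_number n E) / real (clique_number n E)"
    using omega clique_number_ge_one[OF n(1), of E] by (intro divide_left_mono) auto
  also have "\<dots> \<le> f_ratio n"
    by (rule ratio_le_f_ratio[OF graph])
  finally show ?thesis .
qed

lemma g_fun_ge_less_ramsey: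
  assumes "0 < n" "n < ramsey s t"
  shows "(log 2 n)\<^sup>2 / (real (s - 1) * real (t - 1)) \<le> g_fun n"
proof -
  have "(log 2 n)\<^sup>2 / (real (s - 1) * real (t - 1))
      = (log 2 n)\<^sup>2 / n * (n / (real (s - 1) * real (t - 1)))"
    using assms(1) by (simp add: field_simps)
  also have "\<dots> \<le> (log 2 n)\<^sup>2 / n * f_ratio n"
    using f_ratio_ge_less_ramsey[OF assms] by (rule mult_left_mono) simp
  finally show ?thesis
    unfolding g_fun_def .
qed

lemma log2_of_nat_nonneg: "0 \<le> log 2 (real m)"
  by (cases "m = 0") (auto simp: log_def)

lemma g_fun_ge_between_diag_ramsey:
  assumes "1 \<le> j" "ramsey j j \<le> n" "n < ramsey (Suc j) (Suc j)"
  shows "(log 2 (ramsey j j) / j)\<^sup>2 \<le> g_fun n"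
proof -
  have R_pos: "0 < ramsey j j"
    using ramsey_diag_ge[of j] assms(1) by simp
  have "(log 2 (ramsey j j) / j)\<^sup>2 \<le> (log 2 n / j)\<^sup>2"
    using R_pos assms(2) by (intro power_mono divide_right_mono) (auto simp: log2_of_nat_nonneg)
  also have "\<dots> = (log 2 n)\<^sup>2 / (real (Suc j - 1) * real (Suc j - 1))"
    by (simp add: power_divide power2_eq_square)
  also have "\<dots> \<le> g_fun n"
    using assms R_pos by (intro g_fun_ge_less_ramsey) auto
  finally show ?thesis .
qed

lemma g_fun_ge_ramsey_minus_one:
  assumes "2 \<le> s" "2 \<le> t"
  shows "(log 2 (ramsey s t) - 1)\<^sup>2 / (real s * real t) \<le> g_fun (ramsey s t - 1)"
proof -
  let ?R = "ramsey s t"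
  have R: "2 \<le> ?R"
    using ramsey_ge_min[of s t] assms by simp
  have "log 2 ?R - 1 = log 2 (?R / 2)"
    using R by (simp add: log_divide)
  also have "\<dots> \<le> log 2 (?R - 1)"
    using R by (simp add: of_nat_diff)
  finally have log_le: "log 2 ?R - 1 \<le> log 2 (?R - 1)" .
  have "0 \<le> log 2 ?R - 1"
    using R by (simp add: le_log_iff)
  then have "(log 2 ?R - 1)\<^sup>2 / (real s * real t) \<le> (log 2 (?R - 1))\<^sup>2 / (real s * real t)"
    using log_le by (intro divide_right_mono power_mono) auto
  also have "\<dots> \<le> (log 2 (?R - 1))\<^sup>2 / (real (s - 1) * real (t - 1))"
    using assms by (intro divide_left_mono mult_mono) auto
  also have "\<dots> \<le> g_fun (?R - 1)"
    using assms R by (intro g_fun_ge_less_ramsey) auto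
  finally show ?thesis .
qed

lemma eventually_between_consecutive_values:
  fixes r :: "nat \<Rightarrow> nat"
  assumes "\<And>k. k \<le> r k"
  shows "\<forall>\<^sub>F n in sequentially. \<exists>j\<ge>K. r j \<le> n \<and> n < r (Suc j)"
  unfolding eventually_sequentially
proof (rule exI[of _ "\<Sum>k\<le>K. r k"], intro allI impI)
  fix n assume n: "(\<Sum>k\<le>K. r k) \<le> n"
  define k where "k = (LEAST k. n < r k)"
  have "n < r (Suc n)"
    using assms[of "Suc n"] by simp
  then have n_less: "n < r k"
    unfolding k_def by (rule LeastI)
  have "K < k"
  proof (rule ccontr)
    assume "\<not> K < k"
    then have "r k \<le> (\<Sum>k\<le>K. r k)"
      by (intro member_le_sum) auto
    with n n_less show False
      by simp
  qed
  moreover have "\<not> n < r (k - 1)"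
    unfolding k_def by (rule not_less_Least) (use \<open>K < k\<close> k_def in simp)
  ultimately show "\<exists>j\<ge>K. r j \<le> n \<and> n < r (Suc j)"
    using n_less by (intro exI[of _ "k - 1"]) auto
qed

lemma eventually_sq_le_g_fun:
  assumes "0 \<le> a" "ereal a < L_const"
  shows "\<forall>\<^sub>F n in sequentially. a\<^sup>2 \<le> g_fun n"
proof -
  obtain K where K: "\<And>k. K \<le> k \<Longrightarrow> a < log 2 (ramsey k k) / k"
    using less_LiminfD[OF assms(2)[unfolded L_const_def]]
    by (auto simp: eventually_sequentially)
  have "\<forall>\<^sub>F n in sequentially. \<exists>j\<ge>max K 1. ramsey j j \<le> n \<and> n < ramsey (Suc j) (Suc j)"
    using ramsey_diag_ge by (rule eventually_between_consecutive_values)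
  then show ?thesis
  proof (rule eventually_mono)
    fix n
    assume "\<exists>j\<ge>max K 1. ramsey j j \<le> n \<and> n < ramsey (Suc j) (Suc j)"
    then obtain j where j: "K \<le> j" "1 \<le> j" "ramsey j j \<le> n" "n < ramsey (Suc j) (Suc j)"
      by auto
    have "a\<^sup>2 \<le> (log 2 (ramsey j j) / j)\<^sup>2"
      using K[OF j(1)] assms(1) by (intro power_mono) auto
    also have "\<dots> \<le> g_fun n"
      using j(2-) by (rule g_fun_ge_between_diag_ramsey)
    finally show "a\<^sup>2 \<le> g_fun n" .
  qed
qed

lemma frequently_log_ramsey_gt:
  assumes "ereal a < M_const"
  shows "\<exists>\<^sub>F t in sequentially. \<exists>s\<in>{1..t}. a * sqrt (real s * real t) < log 2 (ramsey s t)"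
proof -
  let ?m = "\<lambda>t. Max ((\<lambda>s. log 2 (real (ramsey s t)) / sqrt (real s * real t)) ` {1..t})"
  have "\<exists>\<^sub>F t in sequentially. a < ?m t"
  proof (rule ccontr)
    assume "\<not> (\<exists>\<^sub>F t in sequentially. a < ?m t)"
    then have "\<forall>\<^sub>F t in sequentially. ereal (?m t) \<le> ereal a"
      by (simp add: not_frequently not_less)
    then have "M_const \<le> ereal a"
      unfolding M_const_def by (rule Limsup_bounded)
    with assms show False
      by simp
  qed
  from frequently_eventually_frequently[OF this eventually_ge_at_top[of 1]]
  show ?thesis
  proof (rule frequently_elim1)
    fix t :: nat
    assume "a < ?m t \<and> 1 \<le> t"
    then obtain s where "s \<in> {1..t}" "a < log 2 (ramsey s t) / sqrt (real s * real t)"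
      by (auto simp: Max_gr_iff)
    then show "\<exists>s\<in>{1..t}. a * sqrt (real s * real t) < log 2 (ramsey s t)"
      by (auto simp: less_divide_eq)
  qed
qed

lemma sq_le_divide_if_mult_sqrt_le:
  fixes b x y :: real
  assumes "0 \<le> b" "0 < x" "b * sqrt x \<le> y"
  shows "b\<^sup>2 \<le> y\<^sup>2 / x"
proof -
  have "b\<^sup>2 * x = (b * sqrt x)\<^sup>2"
    using assms(2) by (simp add: power_mult_distrib)
  also have "\<dots> \<le> y\<^sup>2"
    using assms by (intro power_mono) auto
  finally show ?thesis
    using assms(2) by (simp add: pos_le_divide_eq)
qed

lemma frequently_sq_le_g_fun:
  assumes "0 \<le> b" "ereal b < M_const"
  shows "\<exists>\<^sub>F n in sequentially. b\<^sup>2 \<le> g_fun n"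
  unfolding frequently_sequentially
proof
  fix N :: nat
  obtain a where "ereal b < ereal a" and a: "ereal a < M_const"
    using ereal_dense2[OF assms(2)] by blast
  then have ba: "b < a"
    by simp
  \<comment> \<open>Once sqrt(st) \<ge> c, the margin (a - b) sqrt(st) covers the loss of 1 in passing from
    log R(s,t) to log (R(s,t) - 1), and a sqrt(st) < log R(s,t) forces R(s,t) > N + 2.\<close>
  define c where "c = max (1 / (a - b)) (log 2 (real N + 2) / a)"
  obtain t s where t: "nat \<lceil>c\<^sup>2\<rceil> \<le> t" and s: "1 \<le> s" "s \<le> t"
    and a_less: "a * sqrt (real s * real t) < log 2 (ramsey s t)"
    using frequently_log_ramsey_gt[OF a] unfolding frequently_sequentially by fastforce
  let ?R = "ramsey s t" and ?q = "sqrt (real s * real t)"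
  have "c \<le> sqrt (real t)"
    using t by (intro real_le_rsqrt) linarith
  also have "\<dots> \<le> ?q"
    using s by simp
  finally have c_le: "c \<le> ?q" .
  have "log 2 (real N + 2) \<le> a * ?q"
    using c_le assms(1) ba by (simp add: c_def pos_divide_le_eq mult.commute)
  with a_less have "log 2 (real N + 2) < log 2 ?R"
    by linarith
  moreover have "0 < ?R"
    using ramsey_ge_min[of s t] s by simp
  ultimately have R_gt: "real N + 2 < ?R"
    by simp
  have "2 \<le> s"
  proof (rule ccontr)
    assume "\<not> 2 \<le> s"
    with s have "s = 1"
      by simp
    with ramsey_one_le[of t] R_gt show False
      by simp
  qed
  have "1 \<le> (a - b) * ?q"
    using c_le ba by (simp add: c_def pos_divide_le_eq mult.commute)
  with a_less have "b * ?q \<le> log 2 ?R - 1"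
    by (simp add: algebra_simps)
  then have "b\<^sup>2 \<le> (log 2 ?R - 1)\<^sup>2 / (real s * real t)"
    using assms(1) s by (intro sq_le_divide_if_mult_sqrt_le) auto
  also have "\<dots> \<le> g_fun (?R - 1)"
    using \<open>2 \<le> s\<close> s by (intro g_fun_ge_ramsey_minus_one) auto
  finally show "\<exists>n\<ge>N. b\<^sup>2 \<le> g_fun n"
    using R_gt by (intro exI[of _ "?R - 1"]) auto
qed

lemma ereal_sq_le_if_below_sq_le:
  fixes X Y :: ereal
  assumes "0 \<le> X" "0 \<le> Y" and sq_le: "\<And>a. 0 \<le> a \<Longrightarrow> ereal a < X \<Longrightarrow> ereal (a\<^sup>2) \<le> Y"
  shows "X\<^sup>2 \<le> Y"
proof (rule dense_le)
  fix w
  assume w: "w < X\<^sup>2"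
  show "w \<le> Y"
  proof (cases "w \<le> 0")
    case True
    with assms(2) show ?thesis
      by simp
  next
    case False
    with w obtain x where x: "w = ereal x" "0 < x"
      by (cases w) auto
    have "ereal (sqrt x) < X"
    proof (cases X)
      case (real y)
      with w x assms(1) show ?thesis
        by (simp add: real_less_lsqrt)
    qed (use assms(1) in auto)
    from sq_le[OF _ this] x show ?thesis
      by simp
  qed
qed

lemma le_Limsup_if_frequently:
  fixes f :: "'a \<Rightarrow> 'b::complete_linorder"
  assumes "\<exists>\<^sub>F x in F. C \<le> f x"
  shows "C \<le> Limsup F f"
proof (rule ccontr)
  assume "\<not> C \<le> Limsup F f"
  then have "\<forall>\<^sub>F x in F. f x < C"
    by (intro Limsup_lessD) (simp add: not_le)
  from frequently_eventually_frequently[OF assms this] show False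
    by (simp add: frequently_def not_less)
qed

lemma L_const_nonneg: "0 \<le> L_const"
  unfolding L_const_def
  by (intro Liminf_bounded always_eventually allI) (simp add: log2_of_nat_nonneg)

lemma M_const_nonneg: "0 \<le> M_const"
  unfolding M_const_def
proof (intro le_Limsup eventually_mono[OF eventually_ge_at_top[of 1]])
  fix t :: nat
  assume "1 \<le> t"
  have "0 \<le> log 2 (real (ramsey 1 t)) / sqrt (real 1 * real t)"
    by (simp add: log2_of_nat_nonneg)
  also have "\<dots> \<le> Max ((\<lambda>s. log 2 (real (ramsey s t)) / sqrt (real s * real t)) ` {1..t})"
    using \<open>1 \<le> t\<close> by (intro Max_ge) (auto intro!: image_eqI[of _ _ 1])
  finally show "0 \<le> ereal (Max ((\<lambda>s. log 2 (real (ramsey s t)) / sqrt (real s * real t)) ` {1..t}))"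
    by simp
qed simp

theorem theorem2p1:
  shows "liminf (\<lambda>n. ereal (g_fun n)) \<ge> L_const ^ 2 \<and>
         limsup (\<lambda>n. ereal (g_fun n)) \<ge> M_const ^ 2"
proof
  show "L_const ^ 2 \<le> liminf (\<lambda>n. ereal (g_fun n))"
  proof (rule ereal_sq_le_if_below_sq_le[OF L_const_nonneg])
    show "0 \<le> liminf (\<lambda>n. ereal (g_fun n))"
      by (intro Liminf_bounded always_eventually allI) (simp add: g_fun_nonneg)
    fix a :: real
    assume "0 \<le> a" "ereal a < L_const"
    from eventually_sq_le_g_fun[OF this] show "ereal (a\<^sup>2) \<le> liminf (\<lambda>n. ereal (g_fun n))"
      by (intro Liminf_bounded) (simp add: eventually_mono)
  qed
  show "M_const ^ 2 \<le> limsup (\<lambda>n. ereal (g_fun n))"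
  proof (rule ereal_sq_le_if_below_sq_le[OF M_const_nonneg])
    show "0 \<le> limsup (\<lambda>n. ereal (g_fun n))"
      by (intro le_Limsup always_eventually allI) (simp_all add: g_fun_nonneg)
    fix b :: real
    assume "0 \<le> b" "ereal b < M_const"
    from frequently_sq_le_g_fun[OF this] show "ereal (b\<^sup>2) \<le> limsup (\<lambda>n. ereal (g_fun n))"
      by (intro le_Limsup_if_frequently) (simp add: frequently_elim1)
  qed
qed

end
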